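(* Let $\alpha\in\mathbb{R}$, $\beta\ge 0$, and let $M_n=\sum_{i=1}^n\sigma(i)$ be the magnetization under the one-dimensional Ising measure $\mathbb{I}_{\alpha,\beta}$ on $\{\pm1\}^{\{1,\dots,n\}}$. Set $$\overline{m}=\frac{e^{\beta}\sinh\alpha}{\sqrt{e^{2\beta}\sinh^2\alpha+e^{-2\beta}}},\qquad t_n=n^{1/3}\,\frac{e^{-\beta}\cosh\alpha}{(e^{2\beta}\sinh^2\alpha+e^{-2\beta})^{3/2}},$$ $$\psi(z)=\exp\!\left(-\frac{2e^{\beta}\sinh^3\alpha+(3e^{\beta}-e^{-3\beta})\sinh\alpha}{6\,(e^{2\beta}\sinh^2\alpha+e^{-2\beta})^{5/2}}\,z^3\right).$$ Then $X_n=\frac{M_n-n\overline{m}}{n^{1/3}}$ converges in the complex mod-Gaussian sense with parameters $t_n$ and limiting function $\psi$, i.e. $$\mathbb{E}_{\alpha,\beta}\!\left[e^{zX_n}\right]e^{-t_n z^2/2}\longrightarrow \psi(z)$$ locally uniformly for $z$ in compact subsets of $\mathbb{C}$.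
   Context: The Ising measure $\mathbb{I}_{\alpha,\beta}$ on spin configurations $\sigma:\{1,\dots,n\}\to\{\pm1\}$ gives to $\sigma$ probability proportional to $\exp\big(\alpha\sum_{i=1}^n\sigma(i)+\beta\sum_{i=1}^{n-1}\sigma(i)\sigma(i+1)\big)$. $\mathbb{E}_{\alpha,\beta}$ denotes expectation under this measure. *)

theory Defs
  imports "HOL-Analysis.Analysis"
begin

definition spin_configs :: "nat \<Rightarrow> (nat \<Rightarrow> real) set" where
  "spin_configs n = PiE {1..n} (\<lambda>_. {-1, 1})"

definition ising_weight :: "real \<Rightarrow> real \<Rightarrow> nat \<Rightarrow> (nat \<Rightarrow> real) \<Rightarrow> real" where
  "ising_weight \<alpha> \<beta> n \<sigma> =
     exp (\<alpha> * (\<Sum>i=1..n. \<sigma> i) + \<beta> * (\<Sum>i=1..n-1. \<sigma> i * \<sigma> (i+1)))"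

definition ising_Z :: "real \<Rightarrow> real \<Rightarrow> nat \<Rightarrow> real" where
  "ising_Z \<alpha> \<beta> n = (\<Sum>\<sigma>\<in>spin_configs n. ising_weight \<alpha> \<beta> n \<sigma>)"

definition ising_expect :: "real \<Rightarrow> real \<Rightarrow> nat \<Rightarrow> ((nat \<Rightarrow> real) \<Rightarrow> complex) \<Rightarrow> complex" where
  "ising_expect \<alpha> \<beta> n f =
     (\<Sum>\<sigma>\<in>spin_configs n. complex_of_real (ising_weight \<alpha> \<beta> n \<sigma>) * f \<sigma>)
       / complex_of_real (ising_Z \<alpha> \<beta> n)"

definition magnetization :: "nat \<Rightarrow> (nat \<Rightarrow> real) \<Rightarrow> real" where
  "magnetization n \<sigma> = (\<Sum>i=1..n. \<sigma> i)"

end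

theory Submission
  imports Defs "HOL-Complex_Analysis.Complex_Analysis" "HOL-Real_Asymp.Real_Asymp"
begin

text \<open>
  Continue the partition function to a complex external field a. Appending one spin acts
  linearly on the pair (Z_n(a), P_n(a)) (partition function, and the same weighted by the last
  spin), so Z_n satisfies a second order linear recurrence whose characteristic roots are
  lam_plus/minus(a) = e^beta cosh a +- sqrt(e^{2beta} sinh^2 a + e^{-2beta}). Hence
  Z_{k+1}(a) = prefactor_k(a) exp(k log lam_plus(a)) with prefactor_k(a) -> A(a) near the
  real axis, where lam_plus strictly dominates and (for beta >= 0) A does not vanish.

  The Laplace transform of X_n = (M_n - n mbar)/n^{1/3} at z equals a ratio of partition
  functions at the fields alpha + h and alpha with h = z/n^{1/3}. The first three derivatives
  of log lam_plus at alpha are mbar, the variance rate and -6 kappa; a cubic Taylor expansion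
  with quartic remainder therefore gives E[exp(z X_n)] exp(-t_n z^2/2) = psi(z) (1 + o(1)),
  the o(1) being uniform along bounded sequences z_n. Uniform convergence on compact sets
  reduces to such sequences.
\<close>

text \<open>The Ising weight continued to a complex external field a; at a = alpha it is the
  weight of Defs, and shifting a by z/c absorbs the factor exp(z M_n / c) of a Laplace transform.\<close>

definition cweight :: "real \<Rightarrow> nat \<Rightarrow> complex \<Rightarrow> (nat \<Rightarrow> real) \<Rightarrow> complex" where
  "cweight \<beta> n a \<sigma> =
     exp (a * of_real (magnetization n \<sigma>) + of_real (\<beta> * (\<Sum>i=1..n-1. \<sigma> i * \<sigma> (i+1))))"

definition cZ :: "real \<Rightarrow> nat \<Rightarrow> complex \<Rightarrow> complex" where
  "cZ \<beta> n a = (\<Sum>\<sigma>\<in>spin_configs n. cweight \<beta> n a \<sigma>)"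

text \<open>Partition function weighted by the last spin; together with Z_n it forms the
  transfer-matrix state vector that evolves linearly when a spin is appended.\<close>

definition cP :: "real \<Rightarrow> nat \<Rightarrow> complex \<Rightarrow> complex" where
  "cP \<beta> n a = (\<Sum>\<sigma>\<in>spin_configs n. cweight \<beta> n a \<sigma> * of_real (\<sigma> n))"

lemma finite_spin_configs: "finite (spin_configs n)"
  unfolding spin_configs_def by (auto intro!: finite_PiE)

lemma spin_configs_values: "\<sigma> \<in> spin_configs n \<Longrightarrow> i \<in> {1..n} \<Longrightarrow> \<sigma> i = 1 \<or> \<sigma> i = -1"
  unfolding spin_configs_def by (auto simp: PiE_def Pi_def)

lemma spin_configs_0: "spin_configs 0 = {\<lambda>_. undefined}"
  unfolding spin_configs_def by simp

lemma sum_spin_configs_Suc: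
  fixes g :: "(nat \<Rightarrow> real) \<Rightarrow> 'b::comm_monoid_add"
  shows "(\<Sum>\<sigma>\<in>spin_configs (Suc n). g \<sigma>) =
    (\<Sum>\<sigma>\<in>spin_configs n. g (\<sigma>(Suc n := 1)) + g (\<sigma>(Suc n := -1)))"
proof -
  have ins: "{1..Suc n} = insert (Suc n) {1..n}" by auto
  have new: "Suc n \<notin> {1..n}" by simp
  have "(\<Sum>\<sigma>\<in>spin_configs (Suc n). g \<sigma>) =
     (\<Sum>(s,\<sigma>)\<in>{-1,1::real} \<times> spin_configs n. g (\<sigma>(Suc n := s)))"
    unfolding spin_configs_def ins PiE_insert_eq
    by (subst sum.reindex) (use inj_combinator[OF new] in \<open>auto simp: case_prod_unfold\<close>)
  also have "\<dots> = (\<Sum>\<sigma>\<in>spin_configs n. \<Sum>s\<in>{-1,1::real}. g (\<sigma>(Suc n := s)))"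
    by (subst sum.cartesian_product[symmetric]) (rule sum.swap)
  also have "\<dots> = (\<Sum>\<sigma>\<in>spin_configs n. g (\<sigma>(Suc n := 1)) + g (\<sigma>(Suc n := -1)))"
    by (intro sum.cong) (auto simp: add.commute)
  finally show ?thesis .
qed

lemma cweight_extend:
  assumes "\<sigma> \<in> spin_configs (Suc k)"
  shows "cweight \<beta> (Suc (Suc k)) a (\<sigma>(Suc (Suc k) := s)) =
         cweight \<beta> (Suc k) a \<sigma> * exp (of_real s * (a + of_real (\<beta> * \<sigma> (Suc k))))"
proof -
  have "(\<Sum>i=1..Suc k. (\<sigma>(Suc (Suc k) := s)) i) = (\<Sum>i=1..Suc k. \<sigma> i)"
    by (intro sum.cong) auto
  then have "magnetization (Suc (Suc k)) (\<sigma>(Suc (Suc k) := s)) = magnetization (Suc k) \<sigma> + s"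
    unfolding magnetization_def by simp
  moreover have "(\<Sum>i=1..k. (\<sigma>(Suc (Suc k) := s)) i * (\<sigma>(Suc (Suc k) := s)) (i+1))
      = (\<Sum>i=1..k. \<sigma> i * \<sigma> (i+1))"
    by (intro sum.cong) auto
  ultimately show ?thesis
    unfolding cweight_def by (simp add: exp_add[symmetric] algebra_simps)
qed

lemma last_spin_sums:
  fixes a :: complex and \<beta> s :: real
  assumes "s = 1 \<or> s = -1"
  defines "c \<equiv> a + of_real (\<beta> * s)"
  shows "exp (of_real 1 * c) + exp (of_real (-1) * c)
           = 2 * cosh a * cosh (of_real \<beta>) + of_real s * (2 * sinh a * sinh (of_real \<beta>))"
    and "exp (of_real 1 * c) * of_real 1 + exp (of_real (-1) * c) * of_real (-1)
           = 2 * sinh a * cosh (of_real \<beta>) + of_real s * (2 * cosh a * sinh (of_real \<beta>))"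
proof -
  have "exp c + exp (- c) = 2 * cosh c" "exp c - exp (- c) = 2 * sinh c"
    by (simp_all add: cosh_field_def sinh_field_def)
  moreover have "cosh c = cosh a * cosh (of_real \<beta>) + of_real s * (sinh a * sinh (of_real \<beta>))"
    and "sinh c = sinh a * cosh (of_real \<beta>) + of_real s * (cosh a * sinh (of_real \<beta>))"
    using assms(1) unfolding c_def by (auto simp: cosh_add sinh_add)
  ultimately show "exp (of_real 1 * c) + exp (of_real (-1) * c)
           = 2 * cosh a * cosh (of_real \<beta>) + of_real s * (2 * sinh a * sinh (of_real \<beta>))"
    and "exp (of_real 1 * c) * of_real 1 + exp (of_real (-1) * c) * of_real (-1)
           = 2 * sinh a * cosh (of_real \<beta>) + of_real s * (2 * cosh a * sinh (of_real \<beta>))"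
    by (simp_all add: algebra_simps)
qed

lemma sum_affine_in_last_spin:
  fixes f g :: "'a \<Rightarrow> complex"
  shows "(\<Sum>x\<in>A. f x * (c0 + g x * c1)) = c0 * (\<Sum>x\<in>A. f x) + c1 * (\<Sum>x\<in>A. f x * g x)"
  by (simp add: sum.distrib sum_distrib_left distrib_left mult_ac)

lemma cZ_cP_rec:
  fixes \<beta> :: real
  defines "b \<equiv> complex_of_real \<beta>"
  shows "cZ \<beta> (Suc (Suc k)) a = 2 * cosh a * cosh b * cZ \<beta> (Suc k) a + 2 * sinh a * sinh b * cP \<beta> (Suc k) a"
    and "cP \<beta> (Suc (Suc k)) a = 2 * sinh a * cosh b * cZ \<beta> (Suc k) a + 2 * cosh a * sinh b * cP \<beta> (Suc k) a"
proof -
  let ?w = "cweight \<beta> (Suc (Suc k)) a" and ?n = "Suc (Suc k)"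
  define c where "c \<sigma> = a + of_real (\<beta> * \<sigma> (Suc k))" for \<sigma> :: "nat \<Rightarrow> real"
  have spin: "\<sigma> (Suc k) = 1 \<or> \<sigma> (Suc k) = -1" if "\<sigma> \<in> spin_configs (Suc k)" for \<sigma>
    using spin_configs_values[OF that] by simp
  have Z_step: "?w (\<sigma>(?n := 1)) + ?w (\<sigma>(?n := -1)) = cweight \<beta> (Suc k) a \<sigma> *
      (2 * cosh a * cosh b + of_real (\<sigma> (Suc k)) * (2 * sinh a * sinh b))"
    if "\<sigma> \<in> spin_configs (Suc k)" for \<sigma>
  proof -
    have "?w (\<sigma>(?n := 1)) + ?w (\<sigma>(?n := -1)) = cweight \<beta> (Suc k) a \<sigma> *
        (exp (of_real 1 * c \<sigma>) + exp (of_real (-1) * c \<sigma>))"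
      unfolding cweight_extend[OF that] c_def by (simp add: algebra_simps)
    then show ?thesis unfolding c_def b_def last_spin_sums(1)[OF spin[OF that]] .
  qed
  have P_step: "?w (\<sigma>(?n := 1)) * of_real ((\<sigma>(?n := 1)) ?n) + ?w (\<sigma>(?n := -1)) * of_real ((\<sigma>(?n := -1)) ?n)
      = cweight \<beta> (Suc k) a \<sigma> * (2 * sinh a * cosh b + of_real (\<sigma> (Suc k)) * (2 * cosh a * sinh b))"
    if "\<sigma> \<in> spin_configs (Suc k)" for \<sigma>
  proof -
    have "?w (\<sigma>(?n := 1)) * of_real ((\<sigma>(?n := 1)) ?n) + ?w (\<sigma>(?n := -1)) * of_real ((\<sigma>(?n := -1)) ?n)
        = cweight \<beta> (Suc k) a \<sigma> *
          (exp (of_real 1 * c \<sigma>) * of_real 1 + exp (of_real (-1) * c \<sigma>) * of_real (-1))"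
      unfolding cweight_extend[OF that] c_def by (simp add: algebra_simps)
    then show ?thesis unfolding c_def b_def last_spin_sums(2)[OF spin[OF that]] .
  qed
  have "cZ \<beta> (Suc (Suc k)) a = (\<Sum>\<sigma>\<in>spin_configs (Suc k). cweight \<beta> (Suc k) a \<sigma> *
      (2 * cosh a * cosh b + of_real (\<sigma> (Suc k)) * (2 * sinh a * sinh b)))"
    unfolding cZ_def sum_spin_configs_Suc[of ?w] by (rule sum.cong[OF refl Z_step])
  then show "cZ \<beta> (Suc (Suc k)) a = 2 * cosh a * cosh b * cZ \<beta> (Suc k) a + 2 * sinh a * sinh b * cP \<beta> (Suc k) a"
    unfolding sum_affine_in_last_spin cZ_def cP_def by (simp add: mult_ac)
  have "cP \<beta> (Suc (Suc k)) a = (\<Sum>\<sigma>\<in>spin_configs (Suc k). cweight \<beta> (Suc k) a \<sigma> *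
      (2 * sinh a * cosh b + of_real (\<sigma> (Suc k)) * (2 * cosh a * sinh b)))"
    unfolding cP_def sum_spin_configs_Suc[of "\<lambda>\<sigma>. ?w \<sigma> * of_real (\<sigma> ?n)"]
    by (rule sum.cong[OF refl P_step])
  then show "cP \<beta> (Suc (Suc k)) a = 2 * sinh a * cosh b * cZ \<beta> (Suc k) a + 2 * cosh a * sinh b * cP \<beta> (Suc k) a"
    unfolding sum_affine_in_last_spin cZ_def cP_def by (simp add: mult_ac)
qed

lemma cZ_one: "cZ \<beta> 1 a = 2 * cosh a"
  unfolding cZ_def One_nat_def sum_spin_configs_Suc spin_configs_0
  by (simp add: cweight_def magnetization_def cosh_field_def)

lemma cP_one: "cP \<beta> 1 a = 2 * sinh a"
  unfolding cP_def One_nat_def sum_spin_configs_Suc spin_configs_0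
  by (simp add: cweight_def magnetization_def sinh_field_def)

text \<open>Eliminating P: Z_n satisfies the linear recurrence given by the trace 2 e^beta cosh a and the
  determinant e^{2beta} - e^{-2beta} of the transfer matrix.\<close>

lemma cZ_three_term_rec:
  "cZ \<beta> (Suc (Suc (Suc k))) a = 2 * of_real (exp \<beta>) * cosh a * cZ \<beta> (Suc (Suc k)) a
     - of_real (exp (2*\<beta>) - exp (-2*\<beta>)) * cZ \<beta> (Suc k) a"
proof -
  define b where "b = complex_of_real \<beta>"
  note Z = cZ_cP_rec(1)[of \<beta>, folded b_def] and P = cZ_cP_rec(2)[of \<beta>, folded b_def]
  have trace: "cosh b + sinh b = of_real (exp \<beta>)"
    unfolding b_def cosh_plus_sinh exp_of_real ..
  have det: "4 * sinh b * cosh b = of_real (exp (2*\<beta>) - exp (-2*\<beta>))"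
  proof -
    have "4 * sinh b * cosh b = 2 * sinh (2 * b)" by (simp add: sinh_double)
    also have "\<dots> = of_real (exp (2*\<beta>) - exp (-2*\<beta>))"
      unfolding sinh_field_def b_def by (simp flip: exp_of_real)
    finally show ?thesis .
  qed
  have "cZ \<beta> (Suc (Suc (Suc k))) a = 2 * cosh a * (cosh b + sinh b) * cZ \<beta> (Suc (Suc k)) a
      - 4 * sinh b * cosh b * (cosh a ^ 2 - sinh a ^ 2) * cZ \<beta> (Suc k) a"
    unfolding Z[of "Suc k"] P[of k] Z[of k] by (simp add: algebra_simps power2_eq_square)
  then show ?thesis
    unfolding trace det cosh_square_eq by (simp add: mult_ac)
qed

lemma two_term_rec_closed_form:
  fixes u :: "nat \<Rightarrow> 'a::field"
  assumes rec: "\<And>k. u (Suc (Suc k)) = (l1 + l2) * u (Suc k) - l1 * l2 * u k"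
    and ne: "l1 \<noteq> l2"
  shows "u k = (u 1 - l2 * u 0) / (l1 - l2) * l1 ^ k + (l1 * u 0 - u 1) / (l1 - l2) * l2 ^ k"
proof -
  define A where "A = (u 1 - l2 * u 0) / (l1 - l2)"
  define B where "B = (l1 * u 0 - u 1) / (l1 - l2)"
  have d: "l1 - l2 \<noteq> 0" using ne by simp
  have "A + B = (l1 - l2) * u 0 / (l1 - l2)"
    unfolding A_def B_def by (simp add: add_divide_distrib[symmetric] algebra_simps)
  moreover have "A * l1 + B * l2 = (l1 - l2) * u 1 / (l1 - l2)"
    unfolding A_def B_def
    by (simp add: add_divide_distrib[symmetric] times_divide_eq_left[symmetric] algebra_simps
             del: times_divide_eq_left)
  ultimately have "A + B = u 0" and "A * l1 + B * l2 = u 1" using d by simp_all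
  then have "u k = A * l1 ^ k + B * l2 ^ k \<and> u (Suc k) = A * l1 ^ Suc k + B * l2 ^ Suc k"
    by (induction k) (simp_all add: rec algebra_simps)
  then show ?thesis unfolding A_def B_def by simp
qed

text \<open>The eigenvalues of the transfer matrix are e^beta cosh a +- sqrt(disc), where
  disc = e^{2beta} sinh^2 a + e^{-2beta}; lam_plus is the dominant one near the real axis.\<close>

definition disc :: "real \<Rightarrow> complex \<Rightarrow> complex" where
  "disc \<beta> a = of_real (exp (2*\<beta>)) * sinh a ^ 2 + of_real (exp (-2*\<beta>))"

definition sqrt_disc :: "real \<Rightarrow> complex \<Rightarrow> complex" where
  "sqrt_disc \<beta> a = csqrt (disc \<beta> a)"

definition lam_plus :: "real \<Rightarrow> complex \<Rightarrow> complex" where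
  "lam_plus \<beta> a = of_real (exp \<beta>) * cosh a + sqrt_disc \<beta> a"

definition lam_minus :: "real \<Rightarrow> complex \<Rightarrow> complex" where
  "lam_minus \<beta> a = of_real (exp \<beta>) * cosh a - sqrt_disc \<beta> a"

definition coefA :: "real \<Rightarrow> complex \<Rightarrow> complex" where
  "coefA \<beta> a = (cZ \<beta> 2 a - lam_minus \<beta> a * cZ \<beta> 1 a) / (lam_plus \<beta> a - lam_minus \<beta> a)"

definition coefB :: "real \<Rightarrow> complex \<Rightarrow> complex" where
  "coefB \<beta> a = (lam_plus \<beta> a * cZ \<beta> 1 a - cZ \<beta> 2 a) / (lam_plus \<beta> a - lam_minus \<beta> a)"

lemma sqrt_disc_square: "sqrt_disc \<beta> a * sqrt_disc \<beta> a = disc \<beta> a"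
  unfolding sqrt_disc_def using power2_csqrt[of "disc \<beta> a"] by (simp add: power2_eq_square)

lemma sqrt_disc_nonzero: "Re (disc \<beta> a) > 0 \<Longrightarrow> sqrt_disc \<beta> a \<noteq> 0"
  using sqrt_disc_square[of \<beta> a] by auto

lemma exp_double_of_real: "(of_real (exp (2*\<beta>)) :: complex) = of_real (exp \<beta>) * of_real (exp \<beta>)"
  by (simp flip: of_real_mult exp_add)

lemma lam_sum_prod:
  "lam_plus \<beta> a + lam_minus \<beta> a = 2 * of_real (exp \<beta>) * cosh a"
  "lam_plus \<beta> a * lam_minus \<beta> a = of_real (exp (2*\<beta>) - exp (-2*\<beta>))"
proof -
  show "lam_plus \<beta> a + lam_minus \<beta> a = 2 * of_real (exp \<beta>) * cosh a"
    unfolding lam_plus_def lam_minus_def by simp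
  have "lam_plus \<beta> a * lam_minus \<beta> a
      = of_real (exp \<beta>) * of_real (exp \<beta>) * cosh a ^ 2 - sqrt_disc \<beta> a * sqrt_disc \<beta> a"
    unfolding lam_plus_def lam_minus_def by (simp add: algebra_simps power2_eq_square)
  also have "\<dots> = of_real (exp (2*\<beta>)) * (cosh a ^ 2 - sinh a ^ 2) - of_real (exp (-2*\<beta>))"
    unfolding sqrt_disc_square disc_def exp_double_of_real by (simp add: algebra_simps)
  finally show "lam_plus \<beta> a * lam_minus \<beta> a = of_real (exp (2*\<beta>) - exp (-2*\<beta>))"
    by (simp add: cosh_square_eq)
qed

lemma cZ_closed_form:
  assumes "Re (disc \<beta> a) > 0"
  shows "cZ \<beta> (Suc k) a = coefA \<beta> a * lam_plus \<beta> a ^ k + coefB \<beta> a * lam_minus \<beta> a ^ k"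
proof -
  have ne: "lam_plus \<beta> a \<noteq> lam_minus \<beta> a"
    using sqrt_disc_nonzero[OF assms] unfolding lam_plus_def lam_minus_def by simp
  have "cZ \<beta> (Suc k) a =
      (cZ \<beta> (Suc 1) a - lam_minus \<beta> a * cZ \<beta> (Suc 0) a) / (lam_plus \<beta> a - lam_minus \<beta> a) * lam_plus \<beta> a ^ k
    + (lam_plus \<beta> a * cZ \<beta> (Suc 0) a - cZ \<beta> (Suc 1) a) / (lam_plus \<beta> a - lam_minus \<beta> a) * lam_minus \<beta> a ^ k"
    by (rule two_term_rec_closed_form[where u = "\<lambda>k. cZ \<beta> (Suc k) a", OF _ ne])
       (simp add: cZ_three_term_rec lam_sum_prod)
  then show ?thesis unfolding coefA_def coefB_def by (simp add: numeral_2_eq_2)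
qed

lemma cZ_of_real: "complex_of_real (ising_Z \<alpha> \<beta> n) = cZ \<beta> n (of_real \<alpha>)"
  unfolding ising_Z_def cZ_def of_real_sum
  by (intro sum.cong refl) (simp add: ising_weight_def cweight_def of_real_exp magnetization_def)

lemma cZ_of_real_nonzero:
  assumes "n \<ge> 1"
  shows "cZ \<beta> n (of_real \<alpha>) \<noteq> 0"
proof -
  have "spin_configs n \<noteq> {}" unfolding spin_configs_def by (simp add: PiE_eq_empty_iff)
  then have "ising_Z \<alpha> \<beta> n > 0" unfolding ising_Z_def ising_weight_def
    by (intro sum_pos finite_spin_configs) auto
  then show ?thesis unfolding cZ_of_real[symmetric] by simp
qed

lemma expect_exp_magnetization:
  fixes z :: complex and c m :: real
  assumes "c \<noteq> 0"
  shows "ising_expect \<alpha> \<beta> n (\<lambda>\<sigma>. exp (z * of_real ((magnetization n \<sigma> - real n * m) / c)))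
     = exp (- (z / of_real c) * of_real (real n * m)) * cZ \<beta> n (of_real \<alpha> + z / of_real c)
         / cZ \<beta> n (of_real \<alpha>)"
proof -
  have "of_real (ising_weight \<alpha> \<beta> n \<sigma>) * exp (z * of_real ((magnetization n \<sigma> - real n * m) / c))
      = exp (- (z / of_real c) * of_real (real n * m)) * cweight \<beta> n (of_real \<alpha> + z / of_real c) \<sigma>"
    for \<sigma>
  proof -
    have "of_real (ising_weight \<alpha> \<beta> n \<sigma>) * exp (z * of_real ((magnetization n \<sigma> - real n * m) / c))
        = exp (of_real (\<alpha> * magnetization n \<sigma> + \<beta> * (\<Sum>i=1..n-1. \<sigma> i * \<sigma> (i+1)))
               + z * of_real ((magnetization n \<sigma> - real n * m) / c))"
      by (simp add: ising_weight_def of_real_exp exp_add magnetization_def)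
    also have "\<dots> = exp (- (z / of_real c) * of_real (real n * m)
               + ((of_real \<alpha> + z / of_real c) * of_real (magnetization n \<sigma>)
                  + of_real (\<beta> * (\<Sum>i=1..n-1. \<sigma> i * \<sigma> (i+1)))))"
      using assms by (intro arg_cong[where f=exp]) (simp add: field_simps)
    finally show ?thesis unfolding cweight_def mult_exp_exp .
  qed
  then show ?thesis
    unfolding ising_expect_def cZ_of_real cZ_def by (simp add: sum_distrib_left)
qed

text \<open>log lam_plus and its first three derivatives, computed in closed form. Their values at
  the real field are the mean, variance and third cumulant rate of the magnetization.\<close>

definition log_lam :: "real \<Rightarrow> complex \<Rightarrow> complex" where
  "log_lam \<beta> a = Ln (lam_plus \<beta> a)"

definition log_lam_d1 :: "real \<Rightarrow> complex \<Rightarrow> complex" where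
  "log_lam_d1 \<beta> a = of_real (exp \<beta>) * sinh a / sqrt_disc \<beta> a"

definition log_lam_d2 :: "real \<Rightarrow> complex \<Rightarrow> complex" where
  "log_lam_d2 \<beta> a = of_real (exp (-\<beta>)) * cosh a / sqrt_disc \<beta> a ^ 3"

definition log_lam_d3 :: "real \<Rightarrow> complex \<Rightarrow> complex" where
  "log_lam_d3 \<beta> a = - of_real (exp (-\<beta>)) * sinh a *
     (2 * of_real (exp (2*\<beta>)) * sinh a ^ 2 + 3 * of_real (exp (2*\<beta>)) - of_real (exp (-2*\<beta>)))
     / sqrt_disc \<beta> a ^ 5"

text \<open>Derivatives of the eigen-data. Re disc > 0 keeps disc off the branch cut of csqrt, and
  Re lam_plus > 0 keeps lam_plus off the branch cut of Ln.\<close>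

lemma has_derivative_disc:
  "(disc \<beta> has_field_derivative 2 * of_real (exp (2*\<beta>)) * sinh a * cosh a) (at a within T)"
  unfolding disc_def[abs_def] by (auto intro!: derivative_eq_intros simp: power2_eq_square)

lemma has_derivative_sqrt_disc:
  assumes "Re (disc \<beta> a) > 0"
  shows "(sqrt_disc \<beta> has_field_derivative of_real (exp (2*\<beta>)) * sinh a * cosh a / sqrt_disc \<beta> a)
           (at a within T)"
proof -
  have "disc \<beta> a \<notin> \<real>\<^sub>\<le>\<^sub>0" using assms by (auto simp: complex_nonpos_Reals_iff)
  from has_field_derivative_csqrt'[OF has_derivative_disc this]
  show ?thesis unfolding sqrt_disc_def[abs_def] by (simp add: mult.assoc)
qed

lemma has_derivative_lam_plus:
  assumes "Re (disc \<beta> a) > 0"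
  shows "(lam_plus \<beta> has_field_derivative
           of_real (exp \<beta>) * sinh a + of_real (exp (2*\<beta>)) * sinh a * cosh a / sqrt_disc \<beta> a) (at a within T)"
  unfolding lam_plus_def[abs_def] by (auto intro!: derivative_eq_intros has_derivative_sqrt_disc[OF assms])

lemma has_derivative_log_lam:
  assumes "Re (disc \<beta> a) > 0" "Re (lam_plus \<beta> a) > 0"
  shows "(log_lam \<beta> has_field_derivative log_lam_d1 \<beta> a) (at a within T)"
proof -
  have nonpos: "lam_plus \<beta> a \<notin> \<real>\<^sub>\<le>\<^sub>0" using assms(2) by (auto simp: complex_nonpos_Reals_iff)
  have "of_real (exp \<beta>) * sinh a + of_real (exp (2*\<beta>)) * sinh a * cosh a / sqrt_disc \<beta> a
      = log_lam_d1 \<beta> a * lam_plus \<beta> a"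
    using sqrt_disc_nonzero[OF assms(1)]
    unfolding log_lam_d1_def exp_double_of_real lam_plus_def by (simp add: field_simps)
  then have eq: "inverse (lam_plus \<beta> a) *
      (of_real (exp \<beta>) * sinh a + of_real (exp (2*\<beta>)) * sinh a * cosh a / sqrt_disc \<beta> a)
      = log_lam_d1 \<beta> a"
    using assms(2) by (auto simp: field_simps)
  show ?thesis
    using DERIV_chain2[OF has_field_derivative_Ln[OF nonpos] has_derivative_lam_plus[OF assms(1)]]
    unfolding log_lam_def[abs_def] eq .
qed

lemma has_derivative_log_lam_d1:
  assumes "Re (disc \<beta> a) > 0"
  shows "(log_lam_d1 \<beta> has_field_derivative log_lam_d2 \<beta> a) (at a within T)"
proof -
  note S = sqrt_disc_nonzero[OF assms]
  have e: "(of_real (exp \<beta>) :: complex) * of_real (exp (-2*\<beta>)) = of_real (exp (-\<beta>))"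
    by (simp flip: of_real_mult exp_add)
  have "(cosh a * of_real (exp \<beta>) * sqrt_disc \<beta> a
        - of_real (exp \<beta>) * sinh a * (of_real (exp (2 * \<beta>)) * sinh a * cosh a) / sqrt_disc \<beta> a)
        / (sqrt_disc \<beta> a * sqrt_disc \<beta> a)
      = of_real (exp \<beta>) * cosh a * (sqrt_disc \<beta> a * sqrt_disc \<beta> a - of_real (exp (2 * \<beta>)) * sinh a ^ 2)
        / sqrt_disc \<beta> a ^ 3"
    using S by (simp add: field_simps power2_eq_square power3_eq_cube)
  also have "\<dots> = log_lam_d2 \<beta> a"
    unfolding sqrt_disc_square log_lam_d2_def disc_def using e by (simp add: mult_ac)
  finally have eq: "(cosh a * of_real (exp \<beta>) * sqrt_disc \<beta> a
        - of_real (exp \<beta>) * sinh a * (of_real (exp (2 * \<beta>)) * sinh a * cosh a) / sqrt_disc \<beta> a)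
        / (sqrt_disc \<beta> a * sqrt_disc \<beta> a) = log_lam_d2 \<beta> a" .
  show ?thesis unfolding log_lam_d1_def[abs_def]
    by (auto intro!: derivative_eq_intros has_derivative_sqrt_disc[OF assms] simp: S eq[symmetric])
qed

lemma has_derivative_log_lam_d2:
  assumes "Re (disc \<beta> a) > 0"
  shows "(log_lam_d2 \<beta> has_field_derivative log_lam_d3 \<beta> a) (at a within T)"
proof -
  note S = sqrt_disc_nonzero[OF assms]
  have "(sinh a * of_real (exp (- \<beta>)) * sqrt_disc \<beta> a ^ 3 - of_real (exp (- \<beta>)) * cosh a *
          (3 * (of_real (exp (2 * \<beta>)) * sinh a * cosh a * (sqrt_disc \<beta> a)\<^sup>2)) / sqrt_disc \<beta> a)
        / sqrt_disc \<beta> a ^ 6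
      = of_real (exp (- \<beta>)) * sinh a
        * (sqrt_disc \<beta> a * sqrt_disc \<beta> a - 3 * of_real (exp (2 * \<beta>)) * cosh a ^ 2) / sqrt_disc \<beta> a ^ 5"
    using S by (simp add: field_simps power2_eq_square power3_eq_cube) (simp add: eval_nat_numeral mult_ac)
  also have "\<dots> = log_lam_d3 \<beta> a"
    unfolding sqrt_disc_square log_lam_d3_def disc_def cosh_square_eq by (simp add: algebra_simps)
  finally have eq: "(sinh a * of_real (exp (- \<beta>)) * sqrt_disc \<beta> a ^ 3 - of_real (exp (- \<beta>)) * cosh a *
          (3 * (of_real (exp (2 * \<beta>)) * sinh a * cosh a * (sqrt_disc \<beta> a)\<^sup>2)) / sqrt_disc \<beta> a)
        / sqrt_disc \<beta> a ^ 6 = log_lam_d3 \<beta> a" .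
  show ?thesis unfolding log_lam_d2_def[abs_def]
    by (auto intro!: derivative_eq_intros has_derivative_sqrt_disc[OF assms] simp: S eq[symmetric])
qed

lemma log_lam_d3_differentiable:
  assumes "Re (disc \<beta> a) > 0"
  shows "log_lam_d3 \<beta> field_differentiable at a"
  unfolding log_lam_d3_def[abs_def] field_differentiable_def
  by (rule exI) (auto intro!: derivative_eq_intros has_derivative_sqrt_disc[OF assms]
                      simp: sqrt_disc_nonzero[OF assms])

lemma cubic_taylor_remainder:
  fixes f0 f1 f2 f3 :: "complex \<Rightarrow> complex"
  assumes r: "r > 0"
    and d0: "\<And>x. x \<in> ball a0 r \<Longrightarrow> (f0 has_field_derivative f1 x) (at x)"
    and d1: "\<And>x. x \<in> ball a0 r \<Longrightarrow> (f1 has_field_derivative f2 x) (at x)"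
    and d2: "\<And>x. x \<in> ball a0 r \<Longrightarrow> (f2 has_field_derivative f3 x) (at x)"
    and hol: "f3 holomorphic_on ball a0 r"
  shows "\<exists>C. \<forall>h. norm h \<le> r/2 \<longrightarrow>
           norm (f0 (a0+h) - (f0 a0 + f1 a0 * h + f2 a0 * h^2/2 + f3 a0 * h^3/6)) \<le> C * norm h ^ 4"
proof -
  define S where "S = cball a0 (r/2)"
  have SU: "S \<subseteq> ball a0 r" unfolding S_def using r by (auto simp: subset_eq)
  have hol4: "deriv f3 holomorphic_on ball a0 r" by (rule holomorphic_deriv[OF hol]) simp
  then have "continuous_on S (deriv f3)"
    using holomorphic_on_imp_continuous_on SU continuous_on_subset by blast
  then have "compact (deriv f3 ` S)" unfolding S_def by (intro compact_continuous_image) auto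
  then obtain B where B: "\<And>x. x \<in> S \<Longrightarrow> norm (deriv f3 x) \<le> B"
    using compact_imp_bounded bounded_iff by (metis image_eqI)
  define f where "f i = (if i = 0 then f0 else if i = 1 then f1 else if i = 2 then f2
      else if i = 3 then f3 else deriv f3)" for i :: nat
  have der: "(f i has_field_derivative f (Suc i) x) (at x within S)" if x: "x \<in> S" and i: "i \<le> 3" for i x
  proof -
    have xU: "x \<in> ball a0 r" using x SU by blast
    have "(f3 has_field_derivative deriv f3 x) (at x)"
      using hol xU by (simp add: holomorphic_derivI)
    then have "(f i has_field_derivative f (Suc i) x) (at x)"
      using i d0[OF xU] d1[OF xU] d2[OF xU] by (auto simp: f_def le_Suc_eq numeral_eq_Suc)
    then show ?thesis by (rule has_field_derivative_at_within)
  qed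
  have B': "\<And>x. x \<in> S \<Longrightarrow> norm (f (Suc 3) x) \<le> B" using B unfolding f_def by simp
  show ?thesis
  proof (intro exI allI impI)
    fix h :: complex assume h: "norm h \<le> r/2"
    have "norm (f 0 (a0+h) - (\<Sum>i\<le>3. f i a0 * (a0+h-a0) ^ i / fact i)) \<le> B * norm (a0+h - a0) ^ Suc 3 / fact 3"
      by (rule complex_Taylor[OF convex_cball[of a0 "r/2", folded S_def] der B'])
         (use h r in \<open>auto simp: S_def dist_norm\<close>)
    then show "norm (f0 (a0+h) - (f0 a0 + f1 a0 * h + f2 a0 * h^2/2 + f3 a0 * h^3/6)) \<le> B/6 * norm h ^ 4"
      by (simp add: f_def eval_nat_numeral fact_numeral add_ac)
  qed
qed

text \<open>Fields where the principal square root and the principal logarithm of lam_plus are holomorphic.\<close>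

definition good_fields :: "real \<Rightarrow> complex set" where
  "good_fields \<beta> = {a. Re (disc \<beta> a) > 0 \<and> Re (lam_plus \<beta> a) > 0}"

lemma isCont_eigen_data:
  assumes "Re (disc \<beta> a) > 0"
  shows "isCont (lam_plus \<beta>) a" "isCont (lam_minus \<beta>) a"
    and "isCont (coefA \<beta>) a" "isCont (coefB \<beta>) a"
proof -
  have cont_sqrt: "isCont (sqrt_disc \<beta>) a"
    using DERIV_isCont[OF has_derivative_sqrt_disc[OF assms]] .
  have cont_cZ: "isCont (cZ \<beta> n) a" for n
    unfolding cZ_def[abs_def] cweight_def by (intro continuous_intros)
  have gap: "lam_plus \<beta> a - lam_minus \<beta> a \<noteq> 0"
    using sqrt_disc_nonzero[OF assms] unfolding lam_plus_def lam_minus_def by simp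
  show lp: "isCont (lam_plus \<beta>) a" and lm: "isCont (lam_minus \<beta>) a"
    unfolding lam_plus_def[abs_def] lam_minus_def[abs_def]
    by (intro continuous_intros cont_sqrt)+
  show "isCont (coefA \<beta>) a" "isCont (coefB \<beta>) a"
    unfolding coefA_def[abs_def] coefB_def[abs_def]
    using gap by (intro continuous_intros lp lm cont_cZ; simp)+
qed

lemma good_fields_ball:
  assumes "a0 \<in> good_fields \<beta>"
  obtains r where "r > 0" "ball a0 r \<subseteq> good_fields \<beta>"
proof -
  have d: "Re (disc \<beta> a0) > 0" and l: "Re (lam_plus \<beta> a0) > 0"
    using assms by (auto simp: good_fields_def)
  have "isCont (disc \<beta>) a0" using DERIV_isCont[OF has_derivative_disc] .
  then have "\<forall>\<^sub>F a in at a0. Re (disc \<beta> a) > 0"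
    using d unfolding isCont_def by (intro order_tendstoD(1)[OF tendsto_Re]) auto
  moreover have "\<forall>\<^sub>F a in at a0. Re (lam_plus \<beta> a) > 0"
    using isCont_eigen_data(1)[OF d] l unfolding isCont_def
    by (intro order_tendstoD(1)[OF tendsto_Re]) auto
  ultimately have "\<forall>\<^sub>F a in at a0. a \<in> good_fields \<beta>"
    by eventually_elim (simp add: good_fields_def)
  then obtain r where "r > 0" "\<And>a. a \<noteq> a0 \<Longrightarrow> dist a a0 < r \<Longrightarrow> a \<in> good_fields \<beta>"
    unfolding eventually_at by blast
  with assms have "ball a0 r \<subseteq> good_fields \<beta>"
    by (metis dist_commute mem_ball subsetI)
  with \<open>r > 0\<close> show ?thesis by (rule that)
qed

definition log_lam_rem :: "real \<Rightarrow> complex \<Rightarrow> complex \<Rightarrow> complex" where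
  "log_lam_rem \<beta> a0 h = log_lam \<beta> (a0 + h) - (log_lam \<beta> a0 + log_lam_d1 \<beta> a0 * h
     + log_lam_d2 \<beta> a0 * h^2/2 + log_lam_d3 \<beta> a0 * h^3/6)"

lemma log_lam_taylor:
  assumes "a0 \<in> good_fields \<beta>"
  obtains r C where "r > 0" "\<And>h. norm h \<le> r \<Longrightarrow> a0 + h \<in> good_fields \<beta>"
    "\<And>h. norm h \<le> r \<Longrightarrow> norm (log_lam_rem \<beta> a0 h) \<le> C * norm h ^ 4"
proof -
  obtain r where r: "r > 0" "ball a0 r \<subseteq> good_fields \<beta>" using good_fields_ball[OF assms] .
  have good: "Re (disc \<beta> x) > 0" "Re (lam_plus \<beta> x) > 0" if "x \<in> ball a0 r" for x
    using r(2) that by (auto simp: good_fields_def)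
  have "log_lam_d3 \<beta> holomorphic_on ball a0 r"
    using log_lam_d3_differentiable[OF good(1)]
    by (simp add: holomorphic_on_open field_differentiable_def)
  then obtain C where C: "\<And>h. norm h \<le> r/2 \<Longrightarrow> norm (log_lam_rem \<beta> a0 h) \<le> C * norm h ^ 4"
    unfolding log_lam_rem_def
    using cubic_taylor_remainder[OF r(1) has_derivative_log_lam has_derivative_log_lam_d1 has_derivative_log_lam_d2]
    by (metis good)
  have "a0 + h \<in> good_fields \<beta>" if "norm h \<le> r/2" for h
    using r that by (intro subsetD[OF r(2)]) (auto simp: dist_norm)
  with r(1) C show ?thesis by (intro that[of "r/2" C]) auto
qed

definition ising_D :: "real \<Rightarrow> real \<Rightarrow> real" where
  "ising_D \<alpha> \<beta> = exp (2*\<beta>) * (sinh \<alpha>)\<^sup>2 + exp (-2*\<beta>)"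

definition ising_mbar :: "real \<Rightarrow> real \<Rightarrow> real" where
  "ising_mbar \<alpha> \<beta> = exp \<beta> * sinh \<alpha> / sqrt (ising_D \<alpha> \<beta>)"

definition ising_var :: "real \<Rightarrow> real \<Rightarrow> real" where
  "ising_var \<alpha> \<beta> = exp (-\<beta>) * cosh \<alpha> / ising_D \<alpha> \<beta> powr (3/2)"

definition ising_kappa :: "real \<Rightarrow> real \<Rightarrow> real" where
  "ising_kappa \<alpha> \<beta> = (2 * exp \<beta> * (sinh \<alpha>)^3 + (3 * exp \<beta> - exp (-3*\<beta>)) * sinh \<alpha>)
                        / (6 * ising_D \<alpha> \<beta> powr (5/2))"

lemma ising_D_pos: "ising_D \<alpha> \<beta> > 0"
  unfolding ising_D_def by (intro add_nonneg_pos) auto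

lemma sinh_cosh_of_real:
  "sinh (complex_of_real x) = of_real (sinh x)" "cosh (complex_of_real x) = of_real (cosh x)"
  by (simp_all add: sinh_field_def cosh_field_def flip: exp_of_real)

lemma eigen_data_at_real:
  fixes \<alpha> \<beta> :: real
  defines "s \<equiv> sqrt (ising_D \<alpha> \<beta>)"
  shows "disc \<beta> (of_real \<alpha>) = of_real (ising_D \<alpha> \<beta>)"
    and "sqrt_disc \<beta> (of_real \<alpha>) = of_real s"
    and "lam_plus \<beta> (of_real \<alpha>) = of_real (exp \<beta> * cosh \<alpha> + s)"
    and "lam_minus \<beta> (of_real \<alpha>) = of_real (exp \<beta> * cosh \<alpha> - s)"
proof -
  show D: "disc \<beta> (of_real \<alpha>) = of_real (ising_D \<alpha> \<beta>)"
    unfolding disc_def ising_D_def sinh_cosh_of_real by simp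
  show S: "sqrt_disc \<beta> (of_real \<alpha>) = of_real s"
    unfolding sqrt_disc_def D s_def by (rule csqrt_of_real[OF less_imp_le[OF ising_D_pos]])
  show "lam_plus \<beta> (of_real \<alpha>) = of_real (exp \<beta> * cosh \<alpha> + s)"
       "lam_minus \<beta> (of_real \<alpha>) = of_real (exp \<beta> * cosh \<alpha> - s)"
    unfolding lam_plus_def lam_minus_def S sinh_cosh_of_real by simp_all
qed

lemma log_lam_derivs_at_real:
  fixes \<alpha> \<beta> :: real
  shows "log_lam_d1 \<beta> (of_real \<alpha>) = of_real (ising_mbar \<alpha> \<beta>)"
    and "log_lam_d2 \<beta> (of_real \<alpha>) = of_real (ising_var \<alpha> \<beta>)"
    and "log_lam_d3 \<beta> (of_real \<alpha>) = - 6 * of_real (ising_kappa \<alpha> \<beta>)"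
proof -
  define D where "D = ising_D \<alpha> \<beta>"
  have pos: "D > 0" unfolding D_def by (rule ising_D_pos)
  note S = eigen_data_at_real(2)[of \<beta> \<alpha>, folded D_def]
  have p3: "D powr (3/2) = sqrt D ^ 3" and p5: "D powr (5/2) = sqrt D ^ 5"
    using pos by (simp_all add: powr_half_sqrt[symmetric] powr_realpow[symmetric] powr_powr)
  show "log_lam_d1 \<beta> (of_real \<alpha>) = of_real (ising_mbar \<alpha> \<beta>)"
    unfolding log_lam_d1_def S ising_mbar_def sinh_cosh_of_real D_def by simp
  show "log_lam_d2 \<beta> (of_real \<alpha>) = of_real (ising_var \<alpha> \<beta>)"
    unfolding log_lam_d2_def S ising_var_def sinh_cosh_of_real D_def[symmetric] p3 by simp
  have "exp (-\<beta>) * sinh \<alpha> * (2 * exp (2*\<beta>) * sinh \<alpha> ^ 2 + 3 * exp (2*\<beta>) - exp (-2*\<beta>))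
      = 2 * (exp (-\<beta>) * exp (2*\<beta>)) * (sinh \<alpha>)^3
        + (3 * (exp (-\<beta>) * exp (2*\<beta>)) - exp (-\<beta>) * exp (-2*\<beta>)) * sinh \<alpha>"
    by (simp add: algebra_simps power2_eq_square power3_eq_cube)
  also have "\<dots> = 2 * exp \<beta> * (sinh \<alpha>)^3 + (3 * exp \<beta> - exp (-3*\<beta>)) * sinh \<alpha>"
    by (simp flip: exp_add)
  finally have num: "exp (-\<beta>) * sinh \<alpha> * (2 * exp (2*\<beta>) * sinh \<alpha> ^ 2 + 3 * exp (2*\<beta>) - exp (-2*\<beta>))
      = 6 * ising_kappa \<alpha> \<beta> * sqrt D ^ 5"
    unfolding ising_kappa_def D_def[symmetric] p5 using pos by simp
  have "log_lam_d3 \<beta> (of_real \<alpha>) = - of_real (exp (-\<beta>) * sinh \<alpha>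
      * (2 * exp (2*\<beta>) * sinh \<alpha> ^ 2 + 3 * exp (2*\<beta>) - exp (-2*\<beta>)) / sqrt D ^ 5)"
    unfolding log_lam_d3_def S sinh_cosh_of_real D_def by simp
  then show "log_lam_d3 \<beta> (of_real \<alpha>) = - 6 * of_real (ising_kappa \<alpha> \<beta>)"
    unfolding num using pos by simp
qed

text \<open>Real fields are good and lam_plus strictly dominates lam_minus there, since
  e^beta cosh alpha > 0 and sqrt D > 0.\<close>

lemma real_field_good:
  fixes \<alpha> \<beta> :: real
  shows "of_real \<alpha> \<in> good_fields \<beta>"
    and "norm (lam_minus \<beta> (of_real \<alpha>) / lam_plus \<beta> (of_real \<alpha>)) < 1"
proof -
  define s where "s = sqrt (ising_D \<alpha> \<beta>)"
  note E = eigen_data_at_real[of \<beta> \<alpha>, folded s_def]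
  have s: "s > 0" unfolding s_def using ising_D_pos by simp
  have c: "exp \<beta> * cosh \<alpha> > 0" by simp
  show "of_real \<alpha> \<in> good_fields \<beta>"
    unfolding good_fields_def mem_Collect_eq E(1,3) by (simp add: ising_D_pos add_pos_pos[OF c s])
  have "\<bar>exp \<beta> * cosh \<alpha> - s\<bar> < exp \<beta> * cosh \<alpha> + s" using s c by linarith
  then show "norm (lam_minus \<beta> (of_real \<alpha>) / lam_plus \<beta> (of_real \<alpha>)) < 1"
    unfolding E(3,4) norm_divide norm_of_real using s c by (simp add: divide_less_eq)
qed

text \<open>For beta >= 0 the coefficient of the dominant eigenvalue does not vanish on the real
  axis: its numerator is a sum of nonnegative terms with one strictly positive.\<close>

lemma coefA_at_real_nonzero:
  fixes \<alpha> \<beta> :: real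
  assumes "\<beta> \<ge> 0"
  shows "coefA \<beta> (of_real \<alpha>) \<noteq> 0"
proof -
  define s where "s = sqrt (ising_D \<alpha> \<beta>)"
  note E = eigen_data_at_real[of \<beta> \<alpha>, folded s_def]
  define c where "c = cosh \<alpha>"
  define h where "h = sinh \<alpha>"
  have s: "s > 0" unfolding s_def using ising_D_pos by simp
  have c: "c > 0" unfolding c_def by simp
  have Z1: "cZ \<beta> 1 (of_real \<alpha>) = of_real (2 * c)"
    unfolding cZ_one c_def sinh_cosh_of_real by simp
  have Z2: "cZ \<beta> 2 (of_real \<alpha>) = of_real (4 * c * c * cosh \<beta> + 4 * h * h * sinh \<beta>)"
    using cZ_cP_rec(1)[of \<beta> 0 "of_real \<alpha>"]
    unfolding numeral_2_eq_2 cZ_one[unfolded One_nat_def] cP_one[unfolded One_nat_def]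
    by (simp add: sinh_cosh_of_real c_def h_def)
  have "cZ \<beta> 2 (of_real \<alpha>) - lam_minus \<beta> (of_real \<alpha>) * cZ \<beta> 1 (of_real \<alpha>)
      = of_real (4 * c * c * cosh \<beta> + 4 * h * h * sinh \<beta> - 2 * c * (exp \<beta> * c - s))"
    unfolding Z1 Z2 E(4) c_def by simp
  also have "4 * c * c * cosh \<beta> + 4 * h * h * sinh \<beta> - 2 * c * (exp \<beta> * c - s)
      = 2 * c * c * exp (-\<beta>) + 4 * h * h * sinh \<beta> + 2 * c * s"
    by (simp add: cosh_def sinh_def exp_minus field_simps)
  finally have num: "cZ \<beta> 2 (of_real \<alpha>) - lam_minus \<beta> (of_real \<alpha>) * cZ \<beta> 1 (of_real \<alpha>)
      = of_real (2 * c * c * exp (-\<beta>) + 4 * h * h * sinh \<beta> + 2 * c * s)" .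
  have "sinh \<beta> \<ge> 0" using assms by simp
  then have pos: "2 * c * c * exp (-\<beta>) + 4 * h * h * sinh \<beta> + 2 * c * s > 0"
    using s c by (intro add_pos_pos add_nonneg_pos mult_pos_pos) auto
  have gap: "lam_plus \<beta> (of_real \<alpha>) - lam_minus \<beta> (of_real \<alpha>) = of_real (2 * s)"
    unfolding E(3,4) by simp
  show ?thesis
    unfolding coefA_def num gap of_real_divide[symmetric] of_real_eq_0_iff using pos s by simp
qed

text \<open>Z_{k+1}(a) = prefactor_k(a) exp(k log lam_plus(a)); the prefactor converges to A(a)
  since |lam_minus/lam_plus| < 1.\<close>

definition prefactor :: "real \<Rightarrow> nat \<Rightarrow> complex \<Rightarrow> complex" where
  "prefactor \<beta> k a = coefA \<beta> a + coefB \<beta> a * (lam_minus \<beta> a / lam_plus \<beta> a) ^ k"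

lemma cZ_factorization:
  assumes "a \<in> good_fields \<beta>"
  shows "cZ \<beta> (Suc k) a = prefactor \<beta> k a * exp (of_nat k * log_lam \<beta> a)"
proof -
  have d: "Re (disc \<beta> a) > 0" and l: "lam_plus \<beta> a \<noteq> 0"
    using assms by (auto simp: good_fields_def)
  have "exp (of_nat k * log_lam \<beta> a) = lam_plus \<beta> a ^ k"
    unfolding exp_of_nat_mult log_lam_def using l by simp
  then show ?thesis unfolding cZ_closed_form[OF d] prefactor_def using l
    by (simp add: field_simps)
qed

text \<open>Convergence of the prefactor along moving fields a_n -> a0 and growing exponents,
  using continuity of the eigen-data and the spectral gap at a0.\<close>

lemma prefactor_tendsto:
  assumes d: "Re (disc \<beta> a0) > 0" and l: "lam_plus \<beta> a0 \<noteq> 0"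
    and ratio: "norm (lam_minus \<beta> a0 / lam_plus \<beta> a0) < 1"
    and a: "a \<longlonglongrightarrow> a0" and m: "filterlim m at_top sequentially"
  shows "(\<lambda>n. prefactor \<beta> (m n) (a n)) \<longlonglongrightarrow> coefA \<beta> a0"
proof -
  define \<rho> where "\<rho> a = lam_minus \<beta> a / lam_plus \<beta> a" for a
  note cont = isCont_eigen_data[OF d]
  have "isCont \<rho> a0" unfolding \<rho>_def[abs_def] using cont(1,2) l by (intro continuous_intros)
  then have \<rho>_lim: "(\<lambda>n. \<rho> (a n)) \<longlonglongrightarrow> \<rho> a0" by (rule isCont_tendsto_compose[OF _ a])
  define q where "q = (1 + norm (\<rho> a0)) / 2"
  have q: "norm (\<rho> a0) < q" "q < 1" "q \<ge> 0" using ratio unfolding q_def \<rho>_def by auto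
  have "\<forall>\<^sub>F n in sequentially. norm (\<rho> (a n)) < q"
    using tendsto_norm[OF \<rho>_lim] q(1) by (rule order_tendstoD(2))
  then have bound: "\<forall>\<^sub>F n in sequentially. norm (\<rho> (a n) ^ m n) \<le> q ^ m n"
    by eventually_elim (simp add: norm_power power_mono)
  have "(\<lambda>n. q ^ n) \<longlonglongrightarrow> 0" using q by (intro LIMSEQ_power_zero) simp
  then have "(\<lambda>n. q ^ m n) \<longlonglongrightarrow> 0" by (rule filterlim_compose[OF _ m])
  then have "(\<lambda>n. \<rho> (a n) ^ m n) \<longlonglongrightarrow> 0" by (rule Lim_null_comparison[OF bound])
  then have "(\<lambda>n. coefA \<beta> (a n) + coefB \<beta> (a n) * \<rho> (a n) ^ m n) \<longlonglongrightarrow> coefA \<beta> a0 + coefB \<beta> a0 * 0"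
    by (intro tendsto_intros isCont_tendsto_compose[OF cont(3) a] isCont_tendsto_compose[OF cont(4) a])
  then show ?thesis unfolding prefactor_def \<rho>_def by simp
qed

lemma cube_root_scale:
  fixes n :: nat
  shows "n \<ge> 1 \<Longrightarrow> real n powr (1/3) > 0"
    and "(real n powr (1/3)) ^ 3 = real n"
    and "filterlim (\<lambda>n. real n powr (1/3)) at_top sequentially"
proof -
  show "real n powr (1/3) > 0" if "n \<ge> 1" using that by simp
  show "(real n powr (1/3)) ^ 3 = real n"
    by (simp add: powr_powr flip: powr_realpow')
  show "filterlim (\<lambda>n. real n powr (1/3)) at_top sequentially" by real_asymp
qed

lemma scaled_bounded_tendsto_zero:
  fixes z :: "nat \<Rightarrow> complex"
  assumes z: "\<And>n. norm (z n) \<le> B"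
  shows "(\<lambda>n. z n / of_real (real n powr (1/3))) \<longlonglongrightarrow> 0"
proof (rule Lim_null_comparison)
  show "\<forall>\<^sub>F n in sequentially. norm (z n / of_real (real n powr (1/3))) \<le> B / real n powr (1/3)"
    using eventually_ge_at_top[of "1::nat"]
    by eventually_elim (use z cube_root_scale(1) in \<open>simp add: norm_divide divide_right_mono\<close>)
  show "(\<lambda>n. B / real n powr (1/3)) \<longlonglongrightarrow> 0"
    by (rule tendsto_divide_0[OF tendsto_const filterlim_at_top_imp_at_infinity[OF cube_root_scale(3)]])
qed

text \<open>A quartic remainder evaluated at z_n / n^{1/3} is o(1/n) when z_n stays bounded:
  n |z_n|^4 / n^{4/3} = O(n^{-1/3}).\<close>

lemma scaled_quartic_remainder_tendsto:
  fixes R :: "complex \<Rightarrow> complex" and z :: "nat \<Rightarrow> complex"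
  assumes r: "r > 0" and R: "\<And>h. norm h \<le> r \<Longrightarrow> norm (R h) \<le> C * norm h ^ 4"
    and z: "\<And>n. norm (z n) \<le> B"
  shows "(\<lambda>n. of_nat n * R (z n / of_real (real n powr (1/3)))) \<longlonglongrightarrow> 0"
proof (rule Lim_null_comparison)
  define c where "c n = real n powr (1/3)" for n
  define h where "h n = z n / of_real (c n)" for n
  have "h \<longlonglongrightarrow> 0" unfolding h_def c_def by (rule scaled_bounded_tendsto_zero[OF z])
  then have "\<forall>\<^sub>F n in sequentially. norm (h n) < r"
    using r unfolding tendsto_iff dist_norm by simp
  then have small: "\<forall>\<^sub>F n in sequentially. norm (h n) \<le> r"
    by eventually_elim simp
  show "\<forall>\<^sub>F n in sequentially. norm (of_nat n * R (z n / of_real (real n powr (1/3)))) \<le> \<bar>C\<bar> * B^4 / c n"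
    using eventually_ge_at_top[of "1::nat"] small
  proof eventually_elim
    case (elim n)
    have cn: "c n > 0" using cube_root_scale(1)[OF elim(1)] unfolding c_def .
    have hB: "norm (h n) \<le> B / c n" unfolding h_def using cn z[of n] by (simp add: norm_divide divide_right_mono)
    have "norm (of_nat n * R (h n)) \<le> real n * (\<bar>C\<bar> * norm (h n) ^ 4)"
      using R[OF elim(2)] by (simp add: norm_mult mult_left_mono order_trans[OF _ mult_right_mono[OF abs_ge_self]])
    also have "\<dots> \<le> real n * (\<bar>C\<bar> * (B / c n) ^ 4)"
      using hB by (intro mult_left_mono power_mono) auto
    also have "\<dots> = \<bar>C\<bar> * B^4 / c n"
      using cube_root_scale(2)[of n, folded c_def] cn
      by (simp add: field_simps) (simp add: eval_nat_numeral)
    finally show ?case unfolding h_def c_def .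
  qed
  show "(\<lambda>n. \<bar>C\<bar> * B^4 / c n) \<longlonglongrightarrow> 0" unfolding c_def
    by (rule tendsto_divide_0[OF tendsto_const filterlim_at_top_imp_at_infinity[OF cube_root_scale(3)]])
qed

text \<open>Exact factorization of the normalized Laplace transform: with h = z/n^{1/3}, the Taylor
  terms of order 1 and 2 cancel the centering and the Gaussian factor, order 3 produces
  psi(z), and what is left is a prefactor ratio times exp(n R(h)).\<close>

lemma normalized_mgf_factorization:
  fixes \<alpha> \<beta> :: real and z :: complex and k :: nat
  defines "n \<equiv> Suc k" and "c \<equiv> real (Suc k) powr (1/3)"
    and "a0 \<equiv> complex_of_real \<alpha>" and "h \<equiv> z / of_real (real (Suc k) powr (1/3))"
  assumes good: "a0 + h \<in> good_fields \<beta>"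
  shows "ising_expect \<alpha> \<beta> n (\<lambda>\<sigma>. exp (z * of_real ((magnetization n \<sigma> - real n * ising_mbar \<alpha> \<beta>) / c)))
           * exp (- of_real (c * ising_var \<alpha> \<beta>) * z^2 / 2)
       = exp (- of_real (ising_kappa \<alpha> \<beta>) * z^3)
           * (prefactor \<beta> k (a0 + h) / prefactor \<beta> k a0 * (lam_plus \<beta> a0 / lam_plus \<beta> (a0 + h))
              * exp (of_nat n * log_lam_rem \<beta> a0 h))"
proof -
  define m v \<kappa> where "m = ising_mbar \<alpha> \<beta>" and "v = ising_var \<alpha> \<beta>" and "\<kappa> = ising_kappa \<alpha> \<beta>"
  define w where "w = log_lam \<beta> (a0 + h) - log_lam \<beta> a0"
  have c: "c > 0" "of_real c ^ 3 = (of_nat n :: complex)"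
    using cube_root_scale(1,2)[of n] unfolding c_def n_def by (simp_all flip: of_real_power)
  have a0: "a0 \<in> good_fields \<beta>" unfolding a0_def by (rule real_field_good(1))
  have lam_nz: "lam_plus \<beta> a \<noteq> 0" if "a \<in> good_fields \<beta>" for a
    using that by (auto simp: good_fields_def)
  have G0: "prefactor \<beta> k a0 \<noteq> 0"
    using cZ_of_real_nonzero[of "Suc k" \<beta> \<alpha>] cZ_factorization[OF a0, of k] unfolding a0_def by auto
  have taylor: "w = of_real m * h + of_real v * h^2/2 - of_real \<kappa> * h^3 + log_lam_rem \<beta> a0 h"
    unfolding w_def log_lam_rem_def a0_def log_lam_derivs_at_real m_def v_def \<kappa>_def by simp
  have exponent: "- h * of_real (real n * m) + of_nat k * w + - of_real (c * v) * z^2 / 2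
      = - of_real \<kappa> * z^3 + - w + of_nat n * log_lam_rem \<beta> a0 h"
  proof -
    have k: "(of_nat k :: complex) = of_nat n - 1" unfolding n_def by simp
    have "z = of_real c * h" unfolding h_def[folded c_def] using c(1) by simp
    then show ?thesis
      unfolding k taylor by (simp add: c(2)[symmetric] field_simps power2_eq_square power3_eq_cube)
  qed
  have ratio: "exp (- w) = lam_plus \<beta> a0 / lam_plus \<beta> (a0 + h)"
    unfolding w_def log_lam_def using lam_nz[OF good] lam_nz[OF a0] by (simp add: exp_diff exp_minus)
  have "ising_expect \<alpha> \<beta> n (\<lambda>\<sigma>. exp (z * of_real ((magnetization n \<sigma> - real n * m) / c)))
      = exp (- (z / of_real c) * of_real (real n * m)) * cZ \<beta> n (of_real \<alpha> + z / of_real c)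
        / cZ \<beta> n (of_real \<alpha>)"
    by (rule expect_exp_magnetization) (use c(1) in simp)
  also have "\<dots> = exp (- h * of_real (real n * m))
        * (prefactor \<beta> k (a0 + h) * exp (of_nat k * log_lam \<beta> (a0 + h)))
        / (prefactor \<beta> k a0 * exp (of_nat k * log_lam \<beta> a0))"
    unfolding h_def[folded c_def, symmetric] a0_def[symmetric] n_def
      cZ_factorization[OF good] cZ_factorization[OF a0] ..
  also have "\<dots> = prefactor \<beta> k (a0 + h) / prefactor \<beta> k a0
      * exp (- h * of_real (real n * m) + (of_nat k * log_lam \<beta> (a0 + h) - of_nat k * log_lam \<beta> a0))"
    using G0 by (simp add: exp_add exp_diff exp_minus field_simps)
  also have "\<dots> = prefactor \<beta> k (a0 + h) / prefactor \<beta> k a0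
      * exp (- h * of_real (real n * m) + of_nat k * w)"
    unfolding w_def by (simp add: right_diff_distrib)
  finally have expect: "ising_expect \<alpha> \<beta> n (\<lambda>\<sigma>. exp (z * of_real ((magnetization n \<sigma> - real n * m) / c)))
      = prefactor \<beta> k (a0 + h) / prefactor \<beta> k a0 * exp (- h * of_real (real n * m) + of_nat k * w)" .
  have "ising_expect \<alpha> \<beta> n (\<lambda>\<sigma>. exp (z * of_real ((magnetization n \<sigma> - real n * m) / c)))
        * exp (- of_real (c * v) * z^2 / 2)
      = prefactor \<beta> k (a0 + h) / prefactor \<beta> k a0
        * exp (- h * of_real (real n * m) + of_nat k * w + - of_real (c * v) * z^2 / 2)"
    unfolding expect exp_add[of _ "- of_real (c * v) * z^2 / 2"] by (simp only: mult.assoc)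
  also have "\<dots> = exp (- of_real \<kappa> * z^3)
      * (prefactor \<beta> k (a0 + h) / prefactor \<beta> k a0 * exp (- w) * exp (of_nat n * log_lam_rem \<beta> a0 h))"
    unfolding exponent exp_add by (simp add: mult_ac)
  finally show ?thesis unfolding ratio m_def v_def \<kappa>_def .
qed

lemma correction_factor_tendsto_one:
  fixes \<alpha> \<beta> :: real and h :: "nat \<Rightarrow> complex"
  assumes \<beta>: "\<beta> \<ge> 0" and h: "h \<longlonglongrightarrow> 0"
  defines "a0 \<equiv> complex_of_real \<alpha>"
  shows "(\<lambda>n. prefactor \<beta> (n - 1) (a0 + h n) / prefactor \<beta> (n - 1) a0
               * (lam_plus \<beta> a0 / lam_plus \<beta> (a0 + h n))) \<longlonglongrightarrow> 1"
proof -
  have d0: "Re (disc \<beta> a0) > 0" and l0: "lam_plus \<beta> a0 \<noteq> 0"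
    using real_field_good(1)[of \<alpha> \<beta>] unfolding a0_def good_fields_def by auto
  have ratio0: "norm (lam_minus \<beta> a0 / lam_plus \<beta> a0) < 1" unfolding a0_def by (rule real_field_good(2))
  have A0: "coefA \<beta> a0 \<noteq> 0" unfolding a0_def by (rule coefA_at_real_nonzero[OF \<beta>])
  have a: "(\<lambda>n. a0 + h n) \<longlonglongrightarrow> a0" using tendsto_add[OF tendsto_const h] by simp
  have m: "filterlim (\<lambda>n. n - 1) at_top sequentially" by (rule filterlim_minus_const_nat_at_top)
  have "(\<lambda>n. lam_plus \<beta> (a0 + h n)) \<longlonglongrightarrow> lam_plus \<beta> a0"
    by (rule isCont_tendsto_compose[OF isCont_eigen_data(1)[OF d0] a])
  then have "(\<lambda>n. prefactor \<beta> (n - 1) (a0 + h n) / prefactor \<beta> (n - 1) a0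
               * (lam_plus \<beta> a0 / lam_plus \<beta> (a0 + h n)))
      \<longlonglongrightarrow> coefA \<beta> a0 / coefA \<beta> a0 * (lam_plus \<beta> a0 / lam_plus \<beta> a0)"
    using A0 l0 by (intro tendsto_intros prefactor_tendsto[OF d0 l0 ratio0 a m]
                       prefactor_tendsto[OF d0 l0 ratio0 tendsto_const m]) auto
  then show ?thesis using A0 l0 by simp
qed

lemma norm_exp_cubic_bound:
  fixes z :: complex and \<kappa> :: real
  assumes "norm z \<le> B"
  shows "norm (exp (- of_real \<kappa> * z^3)) \<le> exp (\<bar>\<kappa>\<bar> * B^3)"
proof -
  have "norm (exp (- of_real \<kappa> * z^3)) \<le> exp (norm (- of_real \<kappa> * z^3))"
    unfolding norm_exp_eq_Re by (rule exp_mono[OF complex_Re_le_cmod])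
  also have "\<dots> \<le> exp (\<bar>\<kappa>\<bar> * B^3)"
    using assms norm_ge_zero[of z]
    by (simp add: norm_mult norm_power mult_left_mono power_mono del: norm_ge_zero)
  finally show ?thesis .
qed

text \<open>Pointwise form of the main theorem along an arbitrary bounded sequence of arguments z_n,
  which is what uniform convergence on compact sets reduces to.\<close>

lemma normalized_mgf_along_bounded_sequence:
  fixes \<alpha> \<beta> :: real and z :: "nat \<Rightarrow> complex"
  assumes \<beta>: "\<beta> \<ge> 0" and z: "\<And>n. norm (z n) \<le> B"
  shows "(\<lambda>n. ising_expect \<alpha> \<beta> n
              (\<lambda>\<sigma>. exp (z n * of_real ((magnetization n \<sigma> - real n * ising_mbar \<alpha> \<beta>) / real n powr (1/3))))
            * exp (- of_real (real n powr (1/3) * ising_var \<alpha> \<beta>) * (z n)^2 / 2)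
          - exp (- of_real (ising_kappa \<alpha> \<beta>) * (z n)^3)) \<longlonglongrightarrow> 0"
proof -
  define a0 where "a0 = complex_of_real \<alpha>"
  define h where "h n = z n / of_real (real n powr (1/3))" for n
  define \<psi> where "\<psi> n = exp (- of_real (ising_kappa \<alpha> \<beta>) * (z n)^3)" for n
  have a0: "a0 \<in> good_fields \<beta>" unfolding a0_def by (rule real_field_good(1))
  obtain r C where r: "r > 0" and good: "\<And>h. norm h \<le> r \<Longrightarrow> a0 + h \<in> good_fields \<beta>"
    and rem: "\<And>h. norm h \<le> r \<Longrightarrow> norm (log_lam_rem \<beta> a0 h) \<le> C * norm h ^ 4"
    using log_lam_taylor[OF a0] by blast
  have h: "h \<longlonglongrightarrow> 0" unfolding h_def by (rule scaled_bounded_tendsto_zero[OF z])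
  have "\<forall>\<^sub>F n in sequentially. norm (h n) < r" using h r unfolding tendsto_iff dist_norm by simp
  then have small: "\<forall>\<^sub>F n in sequentially. norm (h n) \<le> r" by eventually_elim simp
  define Q where "Q n = prefactor \<beta> (n - 1) (a0 + h n) / prefactor \<beta> (n - 1) a0
                        * (lam_plus \<beta> a0 / lam_plus \<beta> (a0 + h n))" for n
  have Q: "Q \<longlonglongrightarrow> 1" unfolding Q_def a0_def by (rule correction_factor_tendsto_one[OF \<beta> h])
  have R: "(\<lambda>n. of_nat n * log_lam_rem \<beta> a0 (h n)) \<longlonglongrightarrow> 0"
    unfolding h_def by (rule scaled_quartic_remainder_tendsto[OF r rem z])
  have error: "(\<lambda>n. Q n * exp (of_nat n * log_lam_rem \<beta> a0 (h n)) - 1) \<longlonglongrightarrow> 0"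
    using tendsto_diff[OF tendsto_mult[OF Q tendsto_exp[OF R]] tendsto_const[of 1]] by simp
  have \<psi>_bound: "norm (\<psi> n) \<le> exp (\<bar>ising_kappa \<alpha> \<beta>\<bar> * B^3)" for n
    unfolding \<psi>_def by (rule norm_exp_cubic_bound[OF z])
  have factor: "\<forall>\<^sub>F n in sequentially.
      ising_expect \<alpha> \<beta> n
        (\<lambda>\<sigma>. exp (z n * of_real ((magnetization n \<sigma> - real n * ising_mbar \<alpha> \<beta>) / real n powr (1/3))))
      * exp (- of_real (real n powr (1/3) * ising_var \<alpha> \<beta>) * (z n)^2 / 2) - \<psi> n
      = \<psi> n * (Q n * exp (of_nat n * log_lam_rem \<beta> a0 (h n)) - 1)"
    using eventually_ge_at_top[of "1::nat"] small
  proof eventually_elim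
    case (elim n)
    then obtain k where n: "n = Suc k" by (cases n) auto
    show ?case
      using normalized_mgf_factorization[of \<alpha> "z n" k \<beta>] good[OF elim(2)]
      unfolding n Q_def h_def \<psi>_def a0_def by (simp add: algebra_simps)
  qed
  show ?thesis
  proof (rule Lim_null_comparison)
    show "\<forall>\<^sub>F n in sequentially. norm (ising_expect \<alpha> \<beta> n
              (\<lambda>\<sigma>. exp (z n * of_real ((magnetization n \<sigma> - real n * ising_mbar \<alpha> \<beta>) / real n powr (1/3))))
            * exp (- of_real (real n powr (1/3) * ising_var \<alpha> \<beta>) * (z n)^2 / 2)
          - exp (- of_real (ising_kappa \<alpha> \<beta>) * (z n)^3))
        \<le> exp (\<bar>ising_kappa \<alpha> \<beta>\<bar> * B^3) * norm (Q n * exp (of_nat n * log_lam_rem \<beta> a0 (h n)) - 1)"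
      using factor unfolding \<psi>_def[symmetric]
      by eventually_elim (simp add: norm_mult mult_right_mono \<psi>_bound)
    show "(\<lambda>n. exp (\<bar>ising_kappa \<alpha> \<beta>\<bar> * B^3) * norm (Q n * exp (of_nat n * log_lam_rem \<beta> a0 (h n)) - 1))
        \<longlonglongrightarrow> 0"
      using tendsto_mult[OF tendsto_const tendsto_norm[OF error]] by simp
  qed
qed

text \<open>Uniform convergence on K follows from convergence along every sequence of points in K
  (choose a bad point for each n otherwise).\<close>

lemma uniform_limit_from_sequences:
  fixes F :: "nat \<Rightarrow> 'a \<Rightarrow> 'b::real_normed_vector"
  assumes seq: "\<And>x. (\<forall>n. x n \<in> K) \<Longrightarrow> (\<lambda>n. F n (x n) - G (x n)) \<longlonglongrightarrow> 0"
  shows "uniform_limit K F G sequentially"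
  unfolding uniform_limit_iff
proof (intro allI impI, rule ccontr)
  fix e :: real assume e: "e > 0"
    and not_unif: "\<not> (\<forall>\<^sub>F n in sequentially. \<forall>x\<in>K. dist (F n x) (G x) < e)"
  define bad where "bad n \<longleftrightarrow> (\<exists>x\<in>K. dist (F n x) (G x) \<ge> e)" for n
  have frequently_bad: "\<forall>N. \<exists>n\<ge>N. bad n"
    using not_unif unfolding eventually_sequentially bad_def by (auto simp: not_less)
  then obtain x0 where x0: "x0 \<in> K" unfolding bad_def by blast
  define x where "x n = (if bad n then SOME x. x \<in> K \<and> dist (F n x) (G x) \<ge> e else x0)" for n
  have x: "x n \<in> K \<and> (bad n \<longrightarrow> dist (F n (x n)) (G (x n)) \<ge> e)" for n
  proof (cases "bad n")
    case True
    then have "\<exists>x. x \<in> K \<and> dist (F n x) (G x) \<ge> e" unfolding bad_def by blast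
    from someI_ex[OF this] True show ?thesis unfolding x_def by simp
  qed (simp add: x_def x0)
  have "(\<lambda>n. F n (x n) - G (x n)) \<longlonglongrightarrow> 0" using seq x by blast
  then obtain N where N: "\<And>n. n \<ge> N \<Longrightarrow> dist (F n (x n)) (G (x n)) < e"
    using e unfolding tendsto_iff eventually_sequentially by (auto simp: dist_norm)
  obtain n where "n \<ge> N" "bad n" using frequently_bad by blast
  with N[of n] x[of n] show False by simp
qed

theorem theorem2p1:
  fixes \<alpha> \<beta> :: real
  assumes "\<beta> \<ge> 0"
  defines "D \<equiv> exp (2*\<beta>) * (sinh \<alpha>)\<^sup>2 + exp (-2*\<beta>)"
  defines "mbar \<equiv> exp \<beta> * sinh \<alpha> / sqrt D"
  defines "t \<equiv> (\<lambda>n::nat. real n powr (1/3) * (exp (-\<beta>) * cosh \<alpha> / D powr (3/2)))"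
  defines "\<psi> \<equiv> (\<lambda>z::complex. exp (- complex_of_real
              ((2 * exp \<beta> * (sinh \<alpha>)^3 + (3 * exp \<beta> - exp (-3*\<beta>)) * sinh \<alpha>)
                / (6 * D powr (5/2))) * z^3))"
  defines "X \<equiv> (\<lambda>n::nat. \<lambda>\<sigma>. (magnetization n \<sigma> - real n * mbar) / real n powr (1/3))"
  shows "\<forall>K. compact K \<longrightarrow>
     uniform_limit K
       (\<lambda>n z. ising_expect \<alpha> \<beta> n (\<lambda>\<sigma>. exp (z * complex_of_real (X n \<sigma>)))
               * exp (- complex_of_real (t n) * z^2 / 2))
       \<psi> sequentially"
proof (intro allI impI uniform_limit_from_sequences)
  fix K :: "complex set" and z :: "nat \<Rightarrow> complex"
  assume "compact K" and z: "\<forall>n. z n \<in> K"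
  then obtain B where "\<And>w. w \<in> K \<Longrightarrow> norm w \<le> B"
    by (meson bounded_iff compact_imp_bounded)
  with z have bounded: "\<And>n. norm (z n) \<le> B" by blast
  have "D = ising_D \<alpha> \<beta>" unfolding D_def ising_D_def ..
  then have paper_constants: "mbar = ising_mbar \<alpha> \<beta>" "t n = real n powr (1/3) * ising_var \<alpha> \<beta>"
      "\<psi> w = exp (- of_real (ising_kappa \<alpha> \<beta>) * w^3)" for n w
    unfolding mbar_def t_def \<psi>_def ising_mbar_def ising_var_def ising_kappa_def by simp_all
  show "(\<lambda>n. ising_expect \<alpha> \<beta> n (\<lambda>\<sigma>. exp (z n * complex_of_real (X n \<sigma>)))
               * exp (- complex_of_real (t n) * (z n)^2 / 2) - \<psi> (z n)) \<longlonglongrightarrow> 0"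
    unfolding X_def paper_constants
    by (rule normalized_mgf_along_bounded_sequence[OF assms(1) bounded])
qed

end
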